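(* Let $(M,d)$ be a compact metric space, let $f:M\to M$ be a homeomorphism satisfying the Anosov Closing property, and let $A:M\to M(d,\mathbb{R})$ be an $\alpha$-H\"older continuous map for some $\alpha>0$. Suppose there exists $c\in\mathbb{R}$ such that for every periodic point $p$ of $f$, all Lyapunov exponents of $(f,A)$ at $p$ are $\ge c$. Then for every $f$-invariant Borel probability measure $\mu$ on $M$, $A(x)\in GL(d,\mathbb{R})$ for $\mu$-almost every $x\in M$.
   Context: $M(d,\mathbb{R})$ is the set of real $d\times d$ matrices with the operator norm. $A$ is $\alpha$-H\"older if $\|A(x)-A(y)\|\le C_2d(x,y)^\alpha$ for some $C_2>0$ and all $x,y$. The cocycle is $A^n(x)=A(f^{n-1}(x))\cdots A(x)$, $A^0=\mathrm{Id}$. $f$ satisfies the Anosov Closing property if there exist $C_1,\varepsilon_0,\theta>0$ such that whenever $d(f^n(z),z)<\varepsilon_0$ there is $p$ with $f^n(p)=p$ and $d(f^j(z),f^j(p))\le C_1e^{-\theta\min\{j,n-j\}}d(f^n(z),z)$ for $j=0,\dots,n$. The Lyapunov exponents of $(f,A)$ at a periodic point $p$ are the (possibly $-\infty$) Lyapunov exponents of the cocycle with respect to the invariant probability measure equidistributed on the orbit of $p$, i.e. the values $\lim_{n\to\infty}\frac1n\log\|A^n(p)v\|$, $v\neq0$. *)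

theory Defs
  imports "HOL-Analysis.Analysis" "HOL-Probability.Probability"
begin

fun cocycle :: "('a \<Rightarrow> 'a) \<Rightarrow> ('a \<Rightarrow> real^'n^'n) \<Rightarrow> nat \<Rightarrow> 'a \<Rightarrow> real^'n^'n" where
  "cocycle f A 0 x = mat 1"
| "cocycle f A (Suc n) x = A ((f ^^ n) x) ** cocycle f A n x"

definition opnorm :: "real^'n^'m \<Rightarrow> real" where
  "opnorm M = onorm (\<lambda>v. M *v v)"

definition anosov_closing :: "('a::metric_space \<Rightarrow> 'a) \<Rightarrow> bool" where
  "anosov_closing f \<longleftrightarrow> (\<exists>C1 eps0 \<theta>. C1 > 0 \<and> eps0 > 0 \<and> \<theta> > 0 \<and>
     (\<forall>z n. dist ((f ^^ n) z) z < eps0 \<longrightarrow>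
        (\<exists>p. (f ^^ n) p = p \<and>
           (\<forall>j\<le>n. dist ((f ^^ j) z) ((f ^^ j) p)
                    \<le> C1 * exp (- \<theta> * real (min j (n - j))) * dist ((f ^^ n) z) z))))"

definition holder :: "real \<Rightarrow> ('a::metric_space \<Rightarrow> real^'n^'n) \<Rightarrow> bool" where
  "holder \<alpha> A \<longleftrightarrow> (\<exists>C2 > 0. \<forall>x y. opnorm (A x - A y) \<le> C2 * dist x y powr \<alpha>)"

definition periodic_point :: "('a \<Rightarrow> 'a) \<Rightarrow> 'a \<Rightarrow> bool" where
  "periodic_point f p \<longleftrightarrow> (\<exists>n>0. (f ^^ n) p = p)"

definition ereal_log_rate :: "nat \<Rightarrow> real \<Rightarrow> ereal" where
  "ereal_log_rate n t = (if t = 0 then -\<infinity> else ereal (ln t / real n))"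

definition lyapunov_exponents :: "('a \<Rightarrow> 'a) \<Rightarrow> ('a \<Rightarrow> real^'n^'n) \<Rightarrow> 'a \<Rightarrow> ereal set" where
  "lyapunov_exponents f A p = {L. \<exists>v. v \<noteq> 0 \<and>
      ((\<lambda>n. ereal_log_rate n (norm (cocycle f A n p *v v))) \<longlongrightarrow> L) sequentially}"

definition invariant_measure :: "('a \<Rightarrow> 'a) \<Rightarrow> 'a measure \<Rightarrow> bool" where
  "invariant_measure f \<mu> \<longleftrightarrow> f \<in> measurable \<mu> \<mu> \<and>
     (\<forall>B\<in>sets \<mu>. emeasure \<mu> (f -` B \<inter> space \<mu>) = emeasure \<mu> B)"

end

theory Submission
  imports Defs "Jordan_Normal_Form.Char_Poly"
begin

text \<open>
  At a periodic point p of period n no vector is annihilated by A^n(p), since that would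
  give the exponent -\<infinity>, and each complex eigenvalue l of A^n(p) produces a real vector
  growing exactly like |l|^k, i.e. an exponent ln |l| / n. Hence every eigenvalue has
  modulus at least exp (n c) and, d being the dimension, |det A^n(p)| \<ge> exp (n d c): the
  Hoelder function D = |det A| has products along periodic orbits at least exp (n d c).
  For \<epsilon> > 0 the truncated logarithm ln (max D \<epsilon>) is again Hoelder, with Birkhoff sums
  \<ge> n d c along periodic orbits. The Anosov closing property shadows every nearly
  returning orbit segment by a periodic one, and cutting an arbitrary segment at the last
  return to each ball of a finite cover bounds all its Birkhoff sums below by N d c - G.
  Integrating against an invariant measure \<mu> gives \<integral> ln (max D \<epsilon>) d\<mu> \<ge> d c for
  every \<epsilon>, whereas this integral tends to -\<infinity> as \<epsilon> \<rightarrow> 0 unless the zero set of D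
  is \<mu>-null.
\<close>

section \<open>Birkhoff sums of Hoelder observables\<close>

lemma holder_imp_continuous:
  fixes g :: "'a::metric_space \<Rightarrow> real"
  assumes holder: "\<And>x y. \<bar>g x - g y\<bar> \<le> K * dist x y powr \<alpha>" and "\<alpha> > 0"
  shows "continuous_on UNIV g"
proof -
  have "isCont g x" for x
  proof -
    have "((\<lambda>y. dist y x) \<longlongrightarrow> 0) (at x)"
      using tendsto_dist[OF tendsto_ident_at tendsto_const, of x x UNIV] by simp
    then have "((\<lambda>y. dist y x powr \<alpha>) \<longlongrightarrow> 0) (at x)"
      by (rule tendsto_zero_powrI[OF _ tendsto_const]) (use \<open>\<alpha> > 0\<close> in auto)
    then have bound_lim: "((\<lambda>y. K * dist y x powr \<alpha>) \<longlongrightarrow> 0) (at x)"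
      by (rule tendsto_mult_right_zero)
    have "((\<lambda>y. g y - g x) \<longlongrightarrow> 0) (at x)"
      by (rule Lim_null_comparison[OF _ bound_lim]) (simp add: holder)
    then show ?thesis unfolding isCont_def by (rule LIM_zero_cancel)
  qed
  then show ?thesis by (simp add: continuous_at_imp_continuous_on)
qed

lemma sum_power_min_le:
  fixes q :: real
  assumes "0 < q" "q < 1"
  shows "(\<Sum>j<n. q ^ min j (n - j)) \<le> 2 / (1 - q)"
proof -
  have geometric: "(\<Sum>j<m. q ^ j) \<le> 1 / (1 - q)" for m
    using assms by (simp add: sum_gp_strict divide_right_mono)
  have "q ^ min j (n - j) \<le> q ^ j + q ^ (n - Suc j)" for j
  proof (cases "j \<le> n - j")
    case True
    then show ?thesis using assms by (simp add: min_def)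
  next
    case False
    have "q ^ (n - j) \<le> q ^ (n - Suc j)" by (rule power_decreasing) (use assms in auto)
    moreover have "0 \<le> q ^ j" using assms by simp
    ultimately show ?thesis using False by (simp add: min_def)
  qed
  then have "(\<Sum>j<n. q ^ min j (n - j)) \<le> (\<Sum>j<n. q ^ j + q ^ (n - Suc j))"
    by (intro sum_mono)
  also have "\<dots> = (\<Sum>j<n. q ^ j) + (\<Sum>j<n. q ^ j)"
    by (simp add: sum.distrib sum.nat_diff_reindex[where g = "\<lambda>j. q ^ j"])
  also have "\<dots> \<le> 2 / (1 - q)"
    using geometric[of n] by simp
  finally show ?thesis .
qed

definition birkhoff_sum :: "('a \<Rightarrow> 'a) \<Rightarrow> ('a \<Rightarrow> real) \<Rightarrow> nat \<Rightarrow> 'a \<Rightarrow> real" where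
  "birkhoff_sum f \<phi> n x = (\<Sum>j<n. \<phi> ((f ^^ j) x))"

lemma birkhoff_sum_0 [simp]: "birkhoff_sum f \<phi> 0 x = 0"
  by (simp add: birkhoff_sum_def)

lemma birkhoff_sum_add:
  "birkhoff_sum f \<phi> (m + n) x = birkhoff_sum f \<phi> m x + birkhoff_sum f \<phi> n ((f ^^ m) x)"
  by (induction n) (simp_all add: birkhoff_sum_def, metis add.commute comp_apply funpow_add)

lemma anosov_closing_birkhoff_sum_ge:
  fixes f :: "'a::metric_space \<Rightarrow> 'a" and \<phi> :: "'a \<Rightarrow> real"
  assumes "anosov_closing f" "\<alpha> > 0" "K \<ge> 0"
    and holder: "\<And>x y. \<bar>\<phi> x - \<phi> y\<bar> \<le> K * dist x y powr \<alpha>"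
    and periodic: "\<And>p n. (f ^^ n) p = p \<Longrightarrow> n > 0 \<Longrightarrow> real n * c \<le> birkhoff_sum f \<phi> n p"
  obtains \<epsilon> E where "\<epsilon> > 0"
    "\<And>w n. dist ((f ^^ n) w) w < \<epsilon> \<Longrightarrow> real n * c - E \<le> birkhoff_sum f \<phi> n w"
proof -
  obtain C \<epsilon> \<theta> where "C > 0" "\<epsilon> > 0" "\<theta> > 0"
    and closing: "\<And>z n. dist ((f ^^ n) z) z < \<epsilon> \<Longrightarrow> \<exists>p. (f ^^ n) p = p \<and>
       (\<forall>j\<le>n. dist ((f ^^ j) z) ((f ^^ j) p) \<le> C * exp (- \<theta> * real (min j (n - j))) * dist ((f ^^ n) z) z)"
    using assms(1) unfolding anosov_closing_def by blast
  define q where "q = exp (- \<theta> * \<alpha>)"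
  have q: "0 < q" "q < 1" using \<open>\<theta> > 0\<close> \<open>\<alpha> > 0\<close> by (auto simp: q_def)
  define E where "E = K * (C * \<epsilon>) powr \<alpha> * (2 / (1 - q))"
  have "E \<ge> 0" using \<open>K \<ge> 0\<close> q by (simp add: E_def)
  have "real n * c - E \<le> birkhoff_sum f \<phi> n w" if return: "dist ((f ^^ n) w) w < \<epsilon>" for w n
  proof (cases "n = 0")
    case True
    then show ?thesis using \<open>E \<ge> 0\<close> by simp
  next
    case False
    obtain p where "(f ^^ n) p = p" and shadow: "\<forall>j\<le>n. dist ((f ^^ j) w) ((f ^^ j) p)
        \<le> C * exp (- \<theta> * real (min j (n - j))) * dist ((f ^^ n) w) w"
      using closing[OF return] by blast
    have term_le: "\<bar>\<phi> ((f ^^ j) w) - \<phi> ((f ^^ j) p)\<bar> \<le> K * (C * \<epsilon>) powr \<alpha> * q ^ min j (n - j)"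
      if "j < n" for j
    proof -
      define m where "m = min j (n - j)"
      have "dist ((f ^^ j) w) ((f ^^ j) p) \<le> C * exp (- \<theta> * real m) * dist ((f ^^ n) w) w"
        using shadow that by (simp add: m_def)
      also have "\<dots> \<le> (C * \<epsilon>) * exp (- \<theta> * real m)"
        using return \<open>C > 0\<close> by (simp add: algebra_simps)
      finally have "dist ((f ^^ j) w) ((f ^^ j) p) powr \<alpha> \<le> ((C * \<epsilon>) * exp (- \<theta> * real m)) powr \<alpha>"
        using \<open>\<alpha> > 0\<close> by (intro powr_mono2) auto
      also have "\<dots> = (C * \<epsilon>) powr \<alpha> * q ^ m"
        using \<open>C > 0\<close> \<open>\<epsilon> > 0\<close>
        by (simp add: powr_mult q_def exp_powr_real flip: exp_of_nat_mult)
      finally have "K * dist ((f ^^ j) w) ((f ^^ j) p) powr \<alpha> \<le> K * ((C * \<epsilon>) powr \<alpha> * q ^ m)"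
        using \<open>K \<ge> 0\<close> by (rule mult_left_mono)
      then show ?thesis
        using holder[of "(f ^^ j) w" "(f ^^ j) p"] by (simp add: m_def mult.assoc)
    qed
    have "(\<Sum>j<n. \<bar>\<phi> ((f ^^ j) w) - \<phi> ((f ^^ j) p)\<bar>) \<le> (\<Sum>j<n. K * (C * \<epsilon>) powr \<alpha> * q ^ min j (n - j))"
      using term_le by (intro sum_mono) auto
    also have "\<dots> \<le> E"
      unfolding E_def sum_distrib_left[symmetric]
      using sum_power_min_le[OF q, of n] \<open>K \<ge> 0\<close> by (intro mult_left_mono) auto
    moreover have "birkhoff_sum f \<phi> n p - birkhoff_sum f \<phi> n w
        \<le> (\<Sum>j<n. \<bar>\<phi> ((f ^^ j) w) - \<phi> ((f ^^ j) p)\<bar>)"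
      unfolding birkhoff_sum_def sum_subtractf[symmetric] by (intro sum_mono) linarith
    ultimately have "birkhoff_sum f \<phi> n p - birkhoff_sum f \<phi> n w \<le> E" by linarith
    moreover have "real n * c \<le> birkhoff_sum f \<phi> n p"
      using periodic \<open>(f ^^ n) p = p\<close> False by blast
    ultimately show ?thesis by linarith
  qed
  with \<open>\<epsilon> > 0\<close> show ?thesis by (rule that)
qed

lemma birkhoff_sum_ge_by_cover:
  fixes f :: "'a::metric_space \<Rightarrow> 'a" and \<phi> :: "'a \<Rightarrow> real"
  assumes returns: "\<And>w n. dist ((f ^^ n) w) w < \<epsilon> \<Longrightarrow> real n * c - E \<le> birkhoff_sum f \<phi> n w"
    and lower: "\<And>x. b \<le> \<phi> x" and "0 \<le> G" "E + c - b \<le> G"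
    and "finite S" "\<forall>j<N. (f ^^ j) z \<in> (\<Union>x\<in>S. ball x (\<epsilon> / 2))"
  shows "real N * c - real (card S) * G \<le> birkhoff_sum f \<phi> N z"
  using assms(5,6)
proof (induction "card S" arbitrary: S z N rule: less_induct)
  case less
  show ?case
  proof (cases "N = 0")
    case True
    then show ?thesis using \<open>0 \<le> G\<close> by simp
  next
    case False
    then obtain x where "x \<in> S" "z \<in> ball x (\<epsilon> / 2)" using less.prems(2) by fastforce
    \<comment> \<open>Cut the orbit at the last visit t to the ball around x: the segment up to t nearly
      returns, and the orbit after t avoids that ball, so one ball fewer covers it.\<close>
    define T where "T = {j. j < N \<and> (f ^^ j) z \<in> ball x (\<epsilon> / 2)}"
    define t where "t = Max T"
    have "finite T" "0 \<in> T" using False \<open>z \<in> ball x (\<epsilon> / 2)\<close> by (auto simp: T_def)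
    then have "t \<in> T" and t_last: "\<And>j. j \<in> T \<Longrightarrow> j \<le> t"
      unfolding t_def by (auto intro: Max_in)
    then have "t < N" "dist ((f ^^ t) z) z < \<epsilon>"
      using \<open>z \<in> ball x (\<epsilon> / 2)\<close> by (auto simp: T_def intro: dist_triangle_half_r)
    then have segment: "real t * c - E \<le> birkhoff_sum f \<phi> t z" by (intro returns)
    define z' where "z' = (f ^^ Suc t) z"
    have shift: "(f ^^ j) z' = (f ^^ (Suc t + j)) z" for j
      by (metis z'_def add.commute comp_apply funpow_add)
    have covered: "\<forall>j<N - Suc t. (f ^^ j) z' \<in> (\<Union>y\<in>S - {x}. ball y (\<epsilon> / 2))"
    proof (intro allI impI)
      fix j assume "j < N - Suc t"
      then have "(f ^^ (Suc t + j)) z \<in> (\<Union>y\<in>S. ball y (\<epsilon> / 2))" "Suc t + j \<notin> T"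
        using less.prems(2)[rule_format, of "Suc t + j"] t_last[of "Suc t + j"] by auto
      then show "(f ^^ j) z' \<in> (\<Union>y\<in>S - {x}. ball y (\<epsilon> / 2))"
        using \<open>j < N - Suc t\<close> by (auto simp: shift T_def)
    qed
    have "card (S - {x}) < card S" "finite (S - {x})"
      using card_Diff1_less[OF less.prems(1) \<open>x \<in> S\<close>] less.prems(1) by simp_all
    from less.hyps[OF this covered]
    have rest: "real (N - Suc t) * c - real (card (S - {x})) * G \<le> birkhoff_sum f \<phi> (N - Suc t) z'" .
    have "birkhoff_sum f \<phi> N z = birkhoff_sum f \<phi> t z + \<phi> ((f ^^ t) z) + birkhoff_sum f \<phi> (N - Suc t) z'"
      using birkhoff_sum_add[of f \<phi> "Suc t" "N - Suc t" z] \<open>t < N\<close>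
      by (simp add: z'_def birkhoff_sum_def)
    moreover have "real (N - Suc t) * c = real N * c - real t * c - c"
      using \<open>t < N\<close> by (simp add: of_nat_diff algebra_simps)
    moreover have "real (card (S - {x})) * G = real (card S) * G - G"
    proof -
      have "card S \<ge> 1" using \<open>x \<in> S\<close> less.prems(1) by (auto simp: Suc_le_eq card_gt_0_iff)
      then show ?thesis using \<open>x \<in> S\<close> by (simp add: of_nat_diff left_diff_distrib)
    qed
    ultimately show ?thesis
      using segment rest lower[of "(f ^^ t) z"] \<open>E + c - b \<le> G\<close> by linarith
  qed
qed

lemma compact_birkhoff_sum_ge:
  fixes f :: "'a::metric_space \<Rightarrow> 'a" and \<phi> :: "'a \<Rightarrow> real"
  assumes "compact (UNIV :: 'a set)" "\<epsilon> > 0"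
    and returns: "\<And>w n. dist ((f ^^ n) w) w < \<epsilon> \<Longrightarrow> real n * c - E \<le> birkhoff_sum f \<phi> n w"
    and lower: "\<And>x. b \<le> \<phi> x"
  obtains G where "\<And>z N. real N * c - G \<le> birkhoff_sum f \<phi> N z"
proof -
  have "UNIV \<subseteq> (\<Union>x\<in>UNIV. ball x (\<epsilon> / 2))" using \<open>\<epsilon> > 0\<close> by auto
  then obtain S :: "'a set" where "finite S" and cover: "UNIV \<subseteq> (\<Union>x\<in>S. ball x (\<epsilon> / 2))"
    by (rule compactE_image[of UNIV UNIV "\<lambda>x. ball x (\<epsilon> / 2)", OF assms(1) open_ball])
  define G where "G = max 0 (E + c - b)"
  have covered: "\<forall>j<N. (f ^^ j) z \<in> (\<Union>x\<in>S. ball x (\<epsilon> / 2))" for z N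
    using subsetD[OF cover] by simp
  have "real N * c - real (card S) * G \<le> birkhoff_sum f \<phi> N z" for z N
    by (rule birkhoff_sum_ge_by_cover[OF returns lower _ _ \<open>finite S\<close> covered]) (simp_all add: G_def)
  then show ?thesis by (rule that)
qed

section \<open>Invariant measures\<close>

lemma measurable_funpow:
  assumes "f \<in> measurable M M"
  shows "(f ^^ n) \<in> measurable M M"
proof (induction n)
  case (Suc n)
  then show ?case unfolding funpow_Suc_right by (rule measurable_comp[OF assms])
qed simp

lemma invariant_measure_distr_funpow:
  assumes "invariant_measure f \<mu>"
  shows "distr \<mu> \<mu> (f ^^ n) = \<mu>"
proof (induction n)
  case 0
  then show ?case by (simp add: id_def)
next
  case (Suc n)
  have f: "f \<in> measurable \<mu> \<mu>" using assms by (simp add: invariant_measure_def)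
  have "distr \<mu> \<mu> f = \<mu>"
  proof (rule measure_eqI)
    fix B assume "B \<in> sets (distr \<mu> \<mu> f)"
    then show "emeasure (distr \<mu> \<mu> f) B = emeasure \<mu> B"
      using assms f by (simp add: emeasure_distr invariant_measure_def)
  qed simp
  then have "distr \<mu> \<mu> (f ^^ n \<circ> f) = \<mu>"
    using distr_distr[OF measurable_funpow[OF f] f] Suc by simp
  then show ?case by (simp only: funpow_Suc_right)
qed

lemma integral_funpow_invariant:
  fixes h :: "'a \<Rightarrow> real"
  assumes "invariant_measure f \<mu>" "h \<in> borel_measurable \<mu>"
  shows "integrable \<mu> (\<lambda>x. h ((f ^^ n) x)) \<longleftrightarrow> integrable \<mu> h"
    and "(\<integral>x. h ((f ^^ n) x) \<partial>\<mu>) = integral\<^sup>L \<mu> h"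
proof -
  have "f \<in> measurable \<mu> \<mu>" using assms(1) by (simp add: invariant_measure_def)
  then have "(f ^^ n) \<in> measurable \<mu> \<mu>" by (rule measurable_funpow)
  then show "integrable \<mu> (\<lambda>x. h ((f ^^ n) x)) \<longleftrightarrow> integrable \<mu> h"
    and "(\<integral>x. h ((f ^^ n) x) \<partial>\<mu>) = integral\<^sup>L \<mu> h"
    using integrable_distr_eq[of "f ^^ n" \<mu> \<mu> h] integral_distr[of "f ^^ n" \<mu> \<mu> h] assms(2)
    by (simp_all add: invariant_measure_distr_funpow[OF assms(1)])
qed

lemma invariant_integral_ge_of_birkhoff_sum_ge:
  fixes \<phi> :: "'a \<Rightarrow> real"
  assumes "prob_space \<mu>" "invariant_measure f \<mu>" "integrable \<mu> \<phi>"
    and birkhoff: "\<And>z N. real N * c - G \<le> birkhoff_sum f \<phi> N z"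
  shows "c \<le> integral\<^sup>L \<mu> \<phi>"
proof (rule ccontr)
  interpret prob_space \<mu> by fact
  assume "\<not> c \<le> integral\<^sup>L \<mu> \<phi>"
  then have "0 < c - integral\<^sup>L \<mu> \<phi>" by simp
  then obtain N where N: "G < real N * (c - integral\<^sup>L \<mu> \<phi>)"
    using reals_Archimedean3 by blast
  have "\<phi> \<in> borel_measurable \<mu>" using assms(3) by simp
  note invariant = integral_funpow_invariant[OF assms(2) this]
  have "real N * c - G \<le> integral\<^sup>L \<mu> (birkhoff_sum f \<phi> N)"
    using birkhoff assms(3) invariant
    by (intro integral_ge_const) (auto simp: birkhoff_sum_def[abs_def])
  also have "\<dots> = real N * integral\<^sup>L \<mu> \<phi>"
    using assms(3) by (simp add: birkhoff_sum_def[abs_def] integral_sum invariant)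
  finally show False using N unfolding right_diff_distrib by linarith
qed

lemma continuous_on_compact_integrable:
  fixes g :: "'a::topological_space \<Rightarrow> real"
  assumes "compact (UNIV :: 'a set)" "continuous_on UNIV g" "finite_measure \<mu>" "sets \<mu> = sets borel"
  shows "integrable \<mu> g"
proof -
  have "bounded (range g)"
    by (intro compact_imp_bounded compact_continuous_image assms)
  then obtain B where "\<And>x. \<bar>g x\<bar> \<le> B" by (auto simp: bounded_iff)
  moreover have "g \<in> borel_measurable \<mu>"
    using borel_measurable_continuous_onI[OF assms(2)] measurable_cong_sets[OF assms(4) refl] by blast
  ultimately show ?thesis
    using assms(3) by (intro finite_measure.integrable_const_bound[where B = B]) auto
qed

lemma invariant_integral_ge_of_periodic_ge:
  fixes f :: "'a::metric_space \<Rightarrow> 'a" and \<phi> :: "'a \<Rightarrow> real"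
  assumes "compact (UNIV :: 'a set)" "anosov_closing f" "\<alpha> > 0" "K \<ge> 0"
    and holder: "\<And>x y. \<bar>\<phi> x - \<phi> y\<bar> \<le> K * dist x y powr \<alpha>"
    and periodic: "\<And>p n. (f ^^ n) p = p \<Longrightarrow> n > 0 \<Longrightarrow> real n * c \<le> birkhoff_sum f \<phi> n p"
    and "prob_space \<mu>" "sets \<mu> = sets borel" "invariant_measure f \<mu>"
  shows "c \<le> integral\<^sup>L \<mu> \<phi>"
proof -
  have "continuous_on UNIV \<phi>" by (rule holder_imp_continuous[OF holder \<open>\<alpha> > 0\<close>])
  then have "bounded (range \<phi>)"
    by (intro compact_imp_bounded compact_continuous_image assms(1))
  then obtain B where B: "\<And>x. \<bar>\<phi> x\<bar> \<le> B" by (auto simp: bounded_iff)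
  have lower: "- B \<le> \<phi> x" for x using B[of x] by (simp add: abs_le_iff)
  obtain \<epsilon> E where "\<epsilon> > 0"
    and returns: "\<And>w n. dist ((f ^^ n) w) w < \<epsilon> \<Longrightarrow> real n * c - E \<le> birkhoff_sum f \<phi> n w"
    using anosov_closing_birkhoff_sum_ge[OF assms(2-4) holder periodic] by blast
  obtain G where "\<And>z N. real N * c - G \<le> birkhoff_sum f \<phi> N z"
    using compact_birkhoff_sum_ge[OF assms(1) \<open>\<epsilon> > 0\<close> returns lower] by blast
  moreover have "integrable \<mu> \<phi>"
    by (rule continuous_on_compact_integrable[OF assms(1) \<open>continuous_on UNIV \<phi>\<close>
          prob_space.finite_measure[OF assms(7)] assms(8)])
  ultimately show ?thesis
    using invariant_integral_ge_of_birkhoff_sum_ge[OF assms(7,9)] by blast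
qed

section \<open>Zero sets of observables with large periodic products\<close>

lemma birkhoff_sum_ln_max_ge:
  fixes g :: "'a \<Rightarrow> real"
  assumes "\<And>x. 0 \<le> g x" "exp t \<le> (\<Prod>j<n. g ((f ^^ j) p))"
  shows "t \<le> birkhoff_sum f (\<lambda>x. ln (max (g x) \<epsilon>)) n p"
proof -
  have "(\<Prod>j<n. g ((f ^^ j) p)) > 0" using assms(2) exp_gt_zero[of t] by linarith
  then have pos: "g ((f ^^ j) p) > 0" if "j < n" for j
    using that assms(1) by (metis finite_lessThan lessThan_iff less_le prod_zero_iff)
  have "t \<le> ln (\<Prod>j<n. g ((f ^^ j) p))"
    using assms(2) \<open>(\<Prod>j<n. g ((f ^^ j) p)) > 0\<close> by (simp add: ln_ge_iff)
  also have "\<dots> = (\<Sum>j<n. ln (g ((f ^^ j) p)))"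
    using pos by (intro ln_prod) force+
  also have "\<dots> \<le> birkhoff_sum f (\<lambda>x. ln (max (g x) \<epsilon>)) n p"
    unfolding birkhoff_sum_def
  proof (rule sum_mono)
    fix j assume "j \<in> {..<n}"
    then have "0 < g ((f ^^ j) p)" using pos by simp
    then show "ln (g ((f ^^ j) p)) \<le> ln (max (g ((f ^^ j) p)) \<epsilon>)" by simp
  qed
  finally show ?thesis .
qed

lemma ln_max_lipschitz:
  fixes a b \<epsilon> :: real
  assumes "\<epsilon> > 0"
  shows "\<bar>ln (max a \<epsilon>) - ln (max b \<epsilon>)\<bar> \<le> \<bar>a - b\<bar> / \<epsilon>"
proof -
  have ln_diff_le: "ln x - ln y \<le> \<bar>a - b\<bar> / \<epsilon>"
    if "x = max a \<epsilon> \<and> y = max b \<epsilon> \<or> x = max b \<epsilon> \<and> y = max a \<epsilon>" for x y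
  proof (cases "y \<le> x")
    case True
    have "\<epsilon> \<le> y" "x - y \<le> \<bar>a - b\<bar>" using that by (auto simp: max_def)
    then have "y > 0" using \<open>\<epsilon> > 0\<close> by linarith
    then have "ln x - ln y = ln (x / y)" using True by (simp add: ln_div)
    also have "\<dots> \<le> x / y - 1" using \<open>y > 0\<close> True by (intro ln_le_minus_one) simp
    also have "\<dots> = (x - y) / y" using \<open>y > 0\<close> by (simp add: field_simps)
    also have "\<dots> \<le> (x - y) / \<epsilon>" using True \<open>\<epsilon> \<le> y\<close> \<open>\<epsilon> > 0\<close> by (intro divide_left_mono) auto
    also have "\<dots> \<le> \<bar>a - b\<bar> / \<epsilon>" using \<open>x - y \<le> \<bar>a - b\<bar>\<close> \<open>\<epsilon> > 0\<close> by (intro divide_right_mono) auto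
    finally show ?thesis .
  next
    case False
    have "\<epsilon> \<le> x" using that by (auto simp: max_def)
    then have "ln x - ln y \<le> 0" using False \<open>\<epsilon> > 0\<close> by simp
    moreover have "0 \<le> \<bar>a - b\<bar> / \<epsilon>" using \<open>\<epsilon> > 0\<close> by simp
    ultimately show ?thesis by linarith
  qed
  show ?thesis
    by (rule abs_leI) (use ln_diff_le[of "max a \<epsilon>" "max b \<epsilon>"] ln_diff_le[of "max b \<epsilon>" "max a \<epsilon>"] in auto)
qed

lemma holder_ln_max:
  fixes g :: "'a::metric_space \<Rightarrow> real"
  assumes "\<epsilon> > 0" "\<And>x y. \<bar>g x - g y\<bar> \<le> K * dist x y powr \<alpha>"
  shows "\<bar>ln (max (g x) \<epsilon>) - ln (max (g y) \<epsilon>)\<bar> \<le> K / \<epsilon> * dist x y powr \<alpha>"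
proof -
  have "\<bar>ln (max (g x) \<epsilon>) - ln (max (g y) \<epsilon>)\<bar> \<le> \<bar>g x - g y\<bar> / \<epsilon>"
    by (rule ln_max_lipschitz[OF \<open>\<epsilon> > 0\<close>])
  also have "\<dots> \<le> K * dist x y powr \<alpha> / \<epsilon>"
    using assms by (intro divide_right_mono) auto
  finally show ?thesis by simp
qed

lemma integral_ln_max_le:
  fixes g :: "'a \<Rightarrow> real"
  assumes "prob_space \<mu>" "{x. g x = 0} \<in> sets \<mu>" "integrable \<mu> (\<lambda>x. ln (max (g x) \<epsilon>))"
    and "\<And>x. g x \<le> M" "0 < \<epsilon>" "\<epsilon> \<le> 1"
  shows "(\<integral>x. ln (max (g x) \<epsilon>) \<partial>\<mu>) \<le> ln (max M 1) - (ln (max M 1) - ln \<epsilon>) * measure \<mu> {x. g x = 0}"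
proof -
  interpret prob_space \<mu> by fact
  define Z where "Z = {x. g x = 0}"
  define U where "U = ln (max M 1)"
  have indicator_integrable: "integrable \<mu> (\<lambda>x. (U - ln \<epsilon>) * indicator Z x)"
    using assms(2) by (intro integrable_mult_right integrable_real_indicator) (auto simp: Z_def less_top[symmetric])
  have "(\<integral>x. ln (max (g x) \<epsilon>) \<partial>\<mu>) \<le> (\<integral>x. U - (U - ln \<epsilon>) * indicator Z x \<partial>\<mu>)"
  proof (rule integral_mono[OF assms(3) Bochner_Integration.integrable_diff[OF integrable_const indicator_integrable]])
    show "ln (max (g x) \<epsilon>) \<le> U - (U - ln \<epsilon>) * indicator Z x" for x
    proof (cases "x \<in> Z")
      case True
      then show ?thesis using \<open>\<epsilon> > 0\<close> by (simp add: Z_def)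
    next
      case False
      have "max (g x) \<epsilon> \<le> max M 1" using assms(4,6) by (rule max.mono)
      then show ?thesis using False \<open>\<epsilon> > 0\<close> by (simp add: U_def)
    qed
  qed
  also have "\<dots> = U - (U - ln \<epsilon>) * measure \<mu> Z"
    using Bochner_Integration.integral_diff[OF integrable_const indicator_integrable] assms(2)
    by (simp add: Z_def prob_space sets.Int_space_eq2)
  finally show ?thesis by (simp add: Z_def U_def)
qed

lemma AE_nonzero_of_periodic_products_ge:
  fixes f :: "'a::metric_space \<Rightarrow> 'a" and g :: "'a \<Rightarrow> real"
  assumes "compact (UNIV :: 'a set)" "anosov_closing f" "\<alpha> > 0" "K \<ge> 0"
    and holder: "\<And>x y. \<bar>g x - g y\<bar> \<le> K * dist x y powr \<alpha>" and nonneg: "\<And>x. 0 \<le> g x"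
    and periodic: "\<And>p n. (f ^^ n) p = p \<Longrightarrow> n > 0 \<Longrightarrow> exp (real n * c) \<le> (\<Prod>j<n. g ((f ^^ j) p))"
    and "prob_space \<mu>" "sets \<mu> = sets borel" "invariant_measure f \<mu>"
  shows "AE x in \<mu>. g x \<noteq> 0"
proof (rule ccontr)
  interpret prob_space \<mu> by fact
  define Z where "Z = {x. g x = 0}"
  have "continuous_on UNIV g" by (rule holder_imp_continuous[OF holder \<open>\<alpha> > 0\<close>])
  then have "Z \<in> sets \<mu>"
    unfolding Z_def \<open>sets \<mu> = sets borel\<close> by (intro borel_closed closed_Collect_eq continuous_on_const)
  moreover have "space \<mu> = UNIV" using sets_eq_imp_space_eq[OF \<open>sets \<mu> = sets borel\<close>] by simp
  moreover assume "\<not> (AE x in \<mu>. g x \<noteq> 0)"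
  ultimately have "measure \<mu> Z > 0"
    by (auto simp: AE_iff_measurable[of Z] Z_def emeasure_eq_measure less_le)
  have "bounded (range g)"
    by (intro compact_imp_bounded compact_continuous_image assms(1) \<open>continuous_on UNIV g\<close>)
  then obtain M where M: "\<And>x. \<bar>g x\<bar> \<le> M" by (auto simp: bounded_iff)
  \<comment> \<open>Truncating g at a level \<epsilon> small enough that ln \<epsilon> on Z outweighs ln M elsewhere
    makes the integral of the Hoelder observable ln (max g \<epsilon>) fall below c.\<close>
  define U where "U = ln (max M 1)"
  define a where "a = U - (U - c + 1) / measure \<mu> Z"
  define \<epsilon> where "\<epsilon> = min 1 (exp a)"
  have "\<epsilon> > 0" "\<epsilon> \<le> 1" "\<epsilon> \<le> exp a" by (simp_all add: \<epsilon>_def)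
  then have "ln \<epsilon> \<le> a" by (metis ln_exp ln_le_cancel_iff exp_gt_zero)
  then have "(U - a) * measure \<mu> Z \<le> (U - ln \<epsilon>) * measure \<mu> Z"
    using \<open>measure \<mu> Z > 0\<close> by (intro mult_right_mono) auto
  moreover have "(U - a) * measure \<mu> Z = U - c + 1"
    using \<open>measure \<mu> Z > 0\<close> by (simp add: a_def)
  ultimately have truncation: "U - c + 1 \<le> (U - ln \<epsilon>) * measure \<mu> Z" by simp
  define \<phi> where "\<phi> = (\<lambda>x. ln (max (g x) \<epsilon>))"
  have \<phi>_holder: "\<bar>\<phi> x - \<phi> y\<bar> \<le> K / \<epsilon> * dist x y powr \<alpha>" for x y
    unfolding \<phi>_def using \<open>\<epsilon> > 0\<close> holder by (rule holder_ln_max)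
  have "0 \<le> K / \<epsilon>" using \<open>K \<ge> 0\<close> \<open>\<epsilon> > 0\<close> by simp
  then have "c \<le> integral\<^sup>L \<mu> \<phi>"
  proof (rule invariant_integral_ge_of_periodic_ge[OF assms(1-3) _ \<phi>_holder _ assms(8-10)])
    show "real n * c \<le> birkhoff_sum f \<phi> n p" if "(f ^^ n) p = p" "n > 0" for p n
      unfolding \<phi>_def using nonneg periodic[OF that] by (rule birkhoff_sum_ln_max_ge)
  qed
  also have "integral\<^sup>L \<mu> \<phi> \<le> U - (U - ln \<epsilon>) * measure \<mu> Z"
    unfolding \<phi>_def U_def Z_def
  proof (rule integral_ln_max_le[OF assms(8) \<open>Z \<in> sets \<mu>\<close>[unfolded Z_def] _ _ \<open>\<epsilon> > 0\<close> \<open>\<epsilon> \<le> 1\<close>])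
    show "integrable \<mu> (\<lambda>x. ln (max (g x) \<epsilon>))"
      using continuous_on_compact_integrable[OF assms(1) holder_imp_continuous[OF \<phi>_holder \<open>\<alpha> > 0\<close>]
          finite_measure assms(9)] by (simp add: \<phi>_def)
    show "g x \<le> M" for x using M[of x] by (simp add: abs_le_iff)
  qed
  finally show False using truncation by linarith
qed

section \<open>Small eigenvalues\<close>

definition index_of_nat :: "nat \<Rightarrow> 'd::finite" where
  "index_of_nat = (SOME h. bij_betw h {0..<CARD('d)} UNIV)"

definition nat_of_index :: "'d::finite \<Rightarrow> nat" where
  "nat_of_index = inv_into {0..<CARD('d)} index_of_nat"

lemma bij_index_of_nat: "bij_betw (index_of_nat :: nat \<Rightarrow> 'd::finite) {0..<CARD('d)} UNIV"
proof -
  have "\<exists>h. bij_betw h {0..<CARD('d)} (UNIV :: 'd set)"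
    using ex_bij_betw_nat_finite[of "UNIV :: 'd set"] by auto
  then show ?thesis unfolding index_of_nat_def by (rule someI_ex)
qed

lemma bij_nat_of_index: "bij_betw (nat_of_index :: 'd::finite \<Rightarrow> nat) UNIV {0..<CARD('d)}"
  unfolding nat_of_index_def by (rule bij_betw_inv_into[OF bij_index_of_nat])

lemma nat_of_index_less [simp]: "nat_of_index (i :: 'd::finite) < CARD('d)"
  using bij_betw_apply[OF bij_nat_of_index] by auto

lemma index_of_nat_of_index [simp]: "index_of_nat (nat_of_index i) = (i :: 'd::finite)"
  unfolding nat_of_index_def by (simp add: bij_betw_inv_into_right[OF bij_index_of_nat])

lemma nat_of_index_of_nat [simp]: "k < CARD('d) \<Longrightarrow> nat_of_index (index_of_nat k :: 'd::finite) = k"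
  unfolding nat_of_index_def by (simp add: bij_betw_inv_into_left[OF bij_index_of_nat])

definition to_jnf :: "'a^'d^'d \<Rightarrow> 'a Matrix.mat" where
  "to_jnf X = Matrix.mat CARD('d::finite) CARD('d) (\<lambda>(i, j). X $ index_of_nat i $ index_of_nat j)"

lemma to_jnf_carrier: "to_jnf (X :: 'a^'d::finite^'d) \<in> carrier_mat CARD('d) CARD('d)"
  unfolding to_jnf_def by auto

lemma det_to_jnf: "Determinant.det (to_jnf X) = Determinants.det (X :: 'a::comm_ring_1^'d::finite^'d)"
proof -
  let ?n = "CARD('d)"
  let ?PU = "{q. q permutes (UNIV :: 'd set)}"
  let ?PN = "{p. p permutes {0..<?n}}"
  define conj where "conj = (\<lambda>q::'d \<Rightarrow> 'd. \<lambda>k. if k < ?n then nat_of_index (q (index_of_nat k)) else k)"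
  have to_nat: "permutes_bij q (UNIV :: 'd set) {0..<?n} nat_of_index index_of_nat"
    if "q permutes UNIV" for q
    using that bij_nat_of_index by unfold_locales auto
  have of_nat: "permutes_bij p {0..<?n} (UNIV :: 'd set) index_of_nat nat_of_index"
    if "p permutes {0..<?n}" for p
    using that bij_index_of_nat by unfold_locales auto
  have bij: "bij_betw conj ?PU ?PN"
  proof (rule bij_betw_byWitness[where f' = "\<lambda>p i. index_of_nat (p (nat_of_index i))"])
    show "\<forall>q\<in>?PU. (\<lambda>i. index_of_nat (conj q (nat_of_index i))) = q"
      by (auto simp: conj_def)
    show "\<forall>p\<in>?PN. conj (\<lambda>i. index_of_nat (p (nat_of_index i))) = p"
      by (auto simp: conj_def fun_eq_iff permutes_not_in permutes_in_image)
    show "conj ` ?PU \<subseteq> ?PN"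
      using permutes_bij.permutes_p'[OF to_nat] by (auto simp: conj_def)
    show "(\<lambda>p i. index_of_nat (p (nat_of_index i))) ` ?PN \<subseteq> ?PU"
      using permutes_bij.permutes_p'[OF of_nat] by auto
  qed
  have "Determinant.det (to_jnf X) = (\<Sum>p\<in>?PN. signof p * (\<Prod>k = 0..<?n. to_jnf X $$ (k, p k)))"
    by (rule det_def'[OF to_jnf_carrier])
  also have "\<dots> = (\<Sum>q\<in>?PU. signof (conj q) * (\<Prod>k = 0..<?n. to_jnf X $$ (k, conj q k)))"
    by (rule sum.reindex_bij_betw[OF bij, symmetric])
  also have "\<dots> = (\<Sum>q\<in>?PU. of_int (sign q) * (\<Prod>i\<in>UNIV. X $ i $ q i))"
  proof (rule sum.cong[OF refl])
    fix q assume "q \<in> ?PU"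
    then have q: "q permutes UNIV" by simp
    have "sign (conj q) = sign q"
      using permutes_bij_finite.sign_p'[of q UNIV "{0..<?n}" nat_of_index index_of_nat] to_nat[OF q]
      unfolding conj_def permutes_bij_finite_def permutes_bij_finite_axioms_def by auto
    moreover have "(\<Prod>k = 0..<?n. to_jnf X $$ (k, conj q k)) = (\<Prod>i\<in>UNIV. X $ i $ q i)"
      using prod.reindex_bij_betw[OF bij_index_of_nat, of "\<lambda>i. X $ i $ q i"]
      by (simp add: to_jnf_def conj_def)
    ultimately show "signof (conj q) * (\<Prod>k = 0..<?n. to_jnf X $$ (k, conj q k))
        = of_int (sign q) * (\<Prod>i\<in>UNIV. X $ i $ q i)"
      by simp
  qed
  also have "\<dots> = Determinants.det X" unfolding Determinants.det_def ..
  finally show ?thesis .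
qed

lemma power_length_le_norm_prod_list:
  fixes as :: "complex list"
  assumes "\<And>a. a \<in> set as \<Longrightarrow> r \<le> cmod a" "0 \<le> r"
  shows "r ^ length as \<le> cmod (\<Prod>a\<leftarrow>as. - a)"
  using assms
proof (induction as)
  case (Cons a as)
  then have "r * r ^ length as \<le> cmod a * cmod (\<Prod>a\<leftarrow>as. - a)"
    by (intro mult_mono) auto
  then show ?case by (simp add: norm_mult)
qed simp

lemma poly_linear_factors: "poly (\<Prod>a\<leftarrow>as. [:- a, 1:]) x = (\<Prod>a\<leftarrow>as. x - (a :: complex))"
  by (induction as) (auto simp: algebra_simps)

lemma eigenvalue_norm_power_le_det:
  fixes A :: "complex Matrix.mat"
  assumes A: "A \<in> carrier_mat n n" and "n > 0"
  obtains l where "eigenvalue A l" "cmod l ^ n \<le> cmod (Determinant.det A)"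
proof -
  obtain as where char_poly: "char_poly A = (\<Prod>a\<leftarrow>as. [:- a, 1:])" and "length as = n"
    using char_poly_factorized[OF A] by blast
  \<comment> \<open>The roots of the characteristic polynomial multiply to \<open>\<plusminus>det A\<close>, so the smallest has
    modulus at most the geometric mean.\<close>
  define l where "l = arg_min_on cmod (set as)"
  have "set as \<noteq> {}" using \<open>length as = n\<close> \<open>n > 0\<close> by auto
  then have "l \<in> set as" and l_least: "\<And>a. a \<in> set as \<Longrightarrow> cmod l \<le> cmod a"
    unfolding l_def by (auto intro: arg_min_if_finite arg_min_least)
  then have "poly (char_poly A) l = 0"
    unfolding char_poly poly_linear_factors by (induction as) auto
  then have "eigenvalue A l" using eigenvalue_root_char_poly[OF A] by simp
  have "poly (char_poly A) 0 = Determinant.det ((-1) \<cdot>\<^sub>m A)"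
    unfolding char_poly_matrix[OF A] by (rule arg_cong[where f = Determinant.det]) (use A in \<open>auto simp: char_matrix_def\<close>)
  also have "\<dots> = (-1) ^ n * Determinant.det A" using A by simp
  moreover have "poly (char_poly A) 0 = (\<Prod>a\<leftarrow>as. - a)"
    unfolding char_poly poly_linear_factors by (induction as) auto
  ultimately have "cmod (\<Prod>a\<leftarrow>as. - a) = cmod (Determinant.det A)"
    by (simp add: norm_mult norm_power)
  then have "cmod l ^ n \<le> cmod (Determinant.det A)"
    using power_length_le_norm_prod_list[of as "cmod l", OF l_least] \<open>length as = n\<close> by simp
  with \<open>eigenvalue A l\<close> show ?thesis by (rule that)
qed

lemma complex_eigenvector_norm_power_le_det:
  fixes X :: "complex^'d::finite^'d"
  obtains l w where "w \<noteq> 0" "X *v w = l *s w" "cmod l ^ CARD('d) \<le> cmod (Determinants.det X)"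
proof -
  let ?n = "CARD('d)"
  obtain l where "eigenvalue (to_jnf X) l" and small: "cmod l ^ ?n \<le> cmod (Determinant.det (to_jnf X))"
    using eigenvalue_norm_power_le_det[OF to_jnf_carrier] by auto
  then obtain v where v: "v \<in> carrier_vec ?n" "v \<noteq> 0\<^sub>v ?n" "to_jnf X *\<^sub>v v = l \<cdot>\<^sub>v v"
    unfolding eigenvalue_def eigenvector_def using to_jnf_carrier[of X] by auto
  define w :: "complex^'d" where "w = (\<chi> i. v $ nat_of_index i)"
  have "X *v w = l *s w"
  proof (rule iffD2[OF Finite_Cartesian_Product.vec_eq_iff], rule allI)
    fix i :: 'd
    have "(X *v w) $ i = (\<Sum>k = 0..<?n. X $ i $ index_of_nat k * w $ index_of_nat k)"
      unfolding matrix_vector_mult_def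
      by (simp add: sum.reindex_bij_betw[OF bij_index_of_nat, of "\<lambda>j. X $ i $ j * w $ j"])
    also have "\<dots> = (to_jnf X *\<^sub>v v) $ nat_of_index i"
      using v(1) by (auto simp: to_jnf_def w_def scalar_prod_def intro: sum.cong)
    also have "\<dots> = (l *s w) $ i" using v(1,3) by (simp add: w_def)
    finally show "(X *v w) $ i = (l *s w) $ i" .
  qed
  moreover have "w \<noteq> 0"
  proof
    assume "w = 0"
    have "v $ k = 0" if "k < ?n" for k
    proof -
      have "w $ index_of_nat k = 0" using \<open>w = 0\<close> by simp
      then show ?thesis using that by (simp add: w_def)
    qed
    then have "v = 0\<^sub>v ?n" using v(1) by (intro eq_vecI) auto
    with v(2) show False ..
  qed
  ultimately show ?thesis using that small det_to_jnf[of X] by metis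
qed

no_notation Matrix.vec_index (infixl \<open>$\<close> 100)

definition cmat :: "real^'n^'m \<Rightarrow> complex^'n^'m" where
  "cmat M = (\<chi> i j. complex_of_real (M $ i $ j))"

definition vec_Re :: "complex^'n \<Rightarrow> real^'n" where
  "vec_Re w = (\<chi> i. Re (w $ i))"

definition vec_Im :: "complex^'n \<Rightarrow> real^'n" where
  "vec_Im w = (\<chi> i. Im (w $ i))"

lemma cmat_mult: "cmat (M ** N) = cmat M ** cmat (N :: real^'k^'n)"
  by (simp add: cmat_def matrix_matrix_mult_def Finite_Cartesian_Product.vec_eq_iff of_real_sum)

lemma cmat_one: "cmat (Finite_Cartesian_Product.mat 1) = Finite_Cartesian_Product.mat 1"
  by (simp add: cmat_def Finite_Cartesian_Product.mat_def Finite_Cartesian_Product.vec_eq_iff)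

lemma det_cmat: "Determinants.det (cmat (M :: real^'n^'n)) = complex_of_real (Determinants.det M)"
  by (simp add: Determinants.det_def cmat_def of_real_sum of_real_prod)

lemma vec_Re_mult: "vec_Re (cmat M *v u) = M *v vec_Re u"
  by (simp add: cmat_def vec_Re_def matrix_vector_mult_def Finite_Cartesian_Product.vec_eq_iff Re_sum)

lemma vec_Im_mult: "vec_Im (cmat M *v u) = M *v vec_Im u"
  by (simp add: cmat_def vec_Im_def matrix_vector_mult_def Finite_Cartesian_Product.vec_eq_iff Im_sum)

lemma vec_Re_scale: "vec_Re (c *s w) = Re c *\<^sub>R vec_Re w - Im c *\<^sub>R vec_Im w"
  by (simp add: vec_Re_def vec_Im_def Finite_Cartesian_Product.vec_eq_iff)

lemma vec_Im_scale: "vec_Im (c *s w) = Im c *\<^sub>R vec_Re w + Re c *\<^sub>R vec_Im w"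
  by (simp add: vec_Re_def vec_Im_def Finite_Cartesian_Product.vec_eq_iff)

lemma vec_Re_zero [simp]: "vec_Re 0 = 0" and vec_Im_zero [simp]: "vec_Im 0 = 0"
  by (simp_all add: vec_Re_def vec_Im_def Finite_Cartesian_Product.vec_eq_iff)

lemma vec_Re_Im_eq_0: "vec_Re w = 0 \<Longrightarrow> vec_Im w = 0 \<Longrightarrow> w = 0"
  by (simp add: vec_Re_def vec_Im_def Finite_Cartesian_Product.vec_eq_iff complex_eq_iff)

lemma matrix_vector_mult_scale: "X *v (c *s u) = c *s (X *v (u :: 'a::comm_ring_1^'n))"
  by (simp add: matrix_vector_mult_def Finite_Cartesian_Product.vec_eq_iff sum_distrib_left algebra_simps)

section \<open>The cocycle over periodic orbits\<close>

definition matpow :: "'a::semiring_1^'n^'n \<Rightarrow> nat \<Rightarrow> 'a^'n^'n" where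
  "matpow B m = ((\<lambda>X. B ** X) ^^ m) (Finite_Cartesian_Product.mat 1)"

lemma matpow_0 [simp]: "matpow B 0 = Finite_Cartesian_Product.mat 1"
  by (simp add: matpow_def)

lemma matpow_Suc: "matpow B (Suc m) = B ** matpow B m"
  by (simp add: matpow_def)

lemma cmat_matpow_eigenvector:
  assumes "cmat B *v w = l *s w"
  shows "cmat (matpow B m) *v w = (l ^ m) *s w"
proof (induction m)
  case (Suc m)
  then show ?case using assms
    by (simp add: matpow_Suc cmat_mult matrix_vector_mul_assoc[symmetric] matrix_vector_mult_scale)
qed (simp add: cmat_one)

lemma cocycle_add: "cocycle f A (m + n) x = cocycle f A m ((f ^^ n) x) ** cocycle f A n x"
  by (induction m) (simp_all add: matrix_mul_assoc funpow_add)

lemma det_cocycle: "Determinants.det (cocycle f A n x) = (\<Prod>j<n. Determinants.det (A ((f ^^ j) x)))"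
  by (induction n) (simp_all add: det_mul)

lemma cocycle_periodic:
  assumes "(f ^^ n) p = p"
  shows "cocycle f A (m * n + r) p = cocycle f A r p ** matpow (cocycle f A n p) m"
proof -
  have period: "(f ^^ (m * n)) p = p" for m
    by (induction m) (simp_all add: funpow_add assms)
  have "cocycle f A (m * n) p = matpow (cocycle f A n p) m"
  proof (induction m)
    case (Suc m)
    have "cocycle f A (Suc m * n) p = cocycle f A (n + m * n) p" by (simp add: add.commute)
    also have "\<dots> = cocycle f A n p ** matpow (cocycle f A n p) m"
      by (simp only: cocycle_add period Suc)
    finally show ?case by (simp add: matpow_Suc)
  qed simp
  moreover have "cocycle f A (m * n + r) p = cocycle f A (r + m * n) p" by (simp add: add.commute)
  ultimately show ?thesis by (simp only: cocycle_add period)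
qed

lemma matpow_vec_Re_eigenvector:
  assumes "cmat B *v w = l *s w"
  shows "matpow B m *v vec_Re w = Re (l ^ m) *\<^sub>R vec_Re w - Im (l ^ m) *\<^sub>R vec_Im w"
proof -
  have "matpow B m *v vec_Re w = vec_Re (cmat (matpow B m) *v w)" by (simp add: vec_Re_mult)
  then show ?thesis by (simp add: cmat_matpow_eigenvector[OF assms] vec_Re_scale)
qed

lemma norm_Re_Im_combination_ge:
  fixes a b :: "'v::real_normed_vector"
  assumes "\<And>u. cmod u = 1 \<Longrightarrow> Re u *\<^sub>R a - Im u *\<^sub>R b \<noteq> 0"
  obtains \<kappa> where "\<kappa> > 0" "\<And>z. \<kappa> * cmod z \<le> norm (Re z *\<^sub>R a - Im z *\<^sub>R b)"
proof -
  define g where "g = (\<lambda>u. norm (Re u *\<^sub>R a - Im u *\<^sub>R b))"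
  have "continuous_on (sphere 0 1) g" unfolding g_def by (intro continuous_intros)
  moreover have "sphere (0::complex) 1 \<noteq> {}" by simp
  ultimately obtain u0 where "u0 \<in> sphere 0 1" and min: "\<And>u. u \<in> sphere 0 1 \<Longrightarrow> g u0 \<le> g u"
    using continuous_attains_inf[OF compact_sphere] by metis
  then have "g u0 > 0" using assms by (simp add: g_def)
  moreover have "g u0 * cmod z \<le> norm (Re z *\<^sub>R a - Im z *\<^sub>R b)" for z
  proof (cases "z = 0")
    case False
    \<comment> \<open>The combination is real-homogeneous in z.\<close>
    define u where "u = z / of_real (cmod z)"
    have "cmod u = 1" using False by (simp add: u_def norm_divide)
    have polar: "z = of_real (cmod z) * u" using False by (simp add: u_def)
    have "Re z = cmod z * Re u" "Im z = cmod z * Im u" by (subst polar, simp)+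
    then have "Re z *\<^sub>R a - Im z *\<^sub>R b = cmod z *\<^sub>R (Re u *\<^sub>R a - Im u *\<^sub>R b)"
      by (simp add: scaleR_diff_right)
    then show ?thesis
      using min[of u] \<open>cmod u = 1\<close> by (simp add: g_def mult.commute mult_left_mono)
  qed simp
  ultimately show ?thesis by (rule that)
qed

lemma eigenvalue_real_if_Re_Im_dependent:
  fixes B :: "real^'n^'n"
  assumes eigen: "cmat B *v w = l *s w" and "vec_Re w \<noteq> 0"
    and u: "cmod u = 1" "Re u *\<^sub>R vec_Re w = Im u *\<^sub>R vec_Im w"
  shows "Im l = 0"
proof -
  \<comment> \<open>Dependence makes vec_Re w a real eigenvector, and comparing with the imaginary part
    forces Im l (1 + t^2) = 0.\<close>
  define a where "a = vec_Re w"
  have "Im u \<noteq> 0"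
  proof
    assume "Im u = 0"
    then have "Re u = 0" using u(2) \<open>vec_Re w \<noteq> 0\<close> by simp
    with \<open>Im u = 0\<close> have "u = 0" by (simp add: complex_eq_iff)
    with u(1) show False by simp
  qed
  define t where "t = Re u / Im u"
  have b: "vec_Im w = t *\<^sub>R a"
    using u(2) \<open>Im u \<noteq> 0\<close> by (simp add: t_def a_def scaleR_scaleR[symmetric] divide_inverse_commute)
  have "B *v a = Re l *\<^sub>R a - Im l *\<^sub>R vec_Im w"
    using arg_cong[OF eigen, of vec_Re] by (simp add: vec_Re_mult vec_Re_scale a_def)
  then have Ba: "B *v a = (Re l - Im l * t) *\<^sub>R a" by (simp add: b scaleR_diff_left)
  have "B *v vec_Im w = Im l *\<^sub>R a + Re l *\<^sub>R vec_Im w"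
    using arg_cong[OF eigen, of vec_Im] by (simp add: vec_Im_mult vec_Im_scale a_def)
  then have "(t * (Re l - Im l * t)) *\<^sub>R a = (Im l + Re l * t) *\<^sub>R a"
    by (simp add: b matrix_vector_mult_scaleR Ba scaleR_add_left)
  then have "t * (Re l - Im l * t) = Im l + Re l * t"
    using \<open>vec_Re w \<noteq> 0\<close> by (simp add: a_def)
  then have "Im l * (1 + t^2) = 0" by (simp add: algebra_simps power2_eq_square)
  moreover have "1 + t\<^sup>2 \<noteq> 0" using zero_le_power2[of t] by linarith
  ultimately show ?thesis by simp
qed

lemma real_orbit_growth_of_eigenvalue:
  fixes B :: "real^'n^'n"
  assumes "cmat B *v w = l *s w" "w \<noteq> 0"
  obtains a \<kappa> K where "a \<noteq> 0" "\<kappa> > 0"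
    "\<And>m. \<kappa> * cmod l ^ m \<le> norm (matpow B m *v a)" "\<And>m. norm (matpow B m *v a) \<le> K * cmod l ^ m"
proof -
  obtain w' where eigen: "cmat B *v w' = l *s w'" and "vec_Re w' \<noteq> 0"
  proof (cases "vec_Re w = 0")
    case True
    have "cmat B *v (\<i> *s w) = l *s (\<i> *s w)"
      using assms(1) by (simp add: matrix_vector_mult_scale vector_smult_assoc mult.commute)
    moreover have "vec_Re (\<i> *s w) \<noteq> 0"
      using True assms(2) vec_Re_Im_eq_0 by (auto simp: vec_Re_scale)
    ultimately show ?thesis by (rule that)
  next
    case False
    then show ?thesis using that assms(1) by blast
  qed
  define a b where "a = vec_Re w'" and "b = vec_Im w'"
  have orbit: "matpow B m *v a = Re (l ^ m) *\<^sub>R a - Im (l ^ m) *\<^sub>R b" for m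
    using matpow_vec_Re_eigenvector[OF eigen] by (simp add: a_def b_def)
  have upper: "norm (matpow B m *v a) \<le> (norm a + norm b) * cmod l ^ m" for m
  proof -
    have "norm (matpow B m *v a) \<le> \<bar>Re (l ^ m)\<bar> * norm a + \<bar>Im (l ^ m)\<bar> * norm b"
      unfolding orbit by (rule order_trans[OF norm_triangle_ineq4]) simp
    also have "\<dots> \<le> cmod (l ^ m) * norm a + cmod (l ^ m) * norm b"
      by (intro add_mono mult_right_mono abs_Re_le_cmod abs_Im_le_cmod) auto
    finally show ?thesis by (simp add: norm_power algebra_simps)
  qed
  show ?thesis
  proof (cases "\<forall>u. cmod u = 1 \<longrightarrow> Re u *\<^sub>R a - Im u *\<^sub>R b \<noteq> 0")
    case True
    then obtain \<kappa> where "\<kappa> > 0" and "\<And>z. \<kappa> * cmod z \<le> norm (Re z *\<^sub>R a - Im z *\<^sub>R b)"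
      using norm_Re_Im_combination_ge by blast
    then have "\<kappa> * cmod l ^ m \<le> norm (matpow B m *v a)" for m
      by (metis orbit norm_power)
    then show ?thesis using that \<open>\<kappa> > 0\<close> upper \<open>vec_Re w' \<noteq> 0\<close> unfolding a_def by blast
  next
    case False
    then obtain u where "cmod u = 1" "Re u *\<^sub>R a = Im u *\<^sub>R b" by auto
    then have "Im l = 0"
      using eigenvalue_real_if_Re_Im_dependent[OF eigen \<open>vec_Re w' \<noteq> 0\<close>] by (simp add: a_def b_def)
    have "norm (matpow B m *v a) = norm a * cmod l ^ m" for m
    proof -
      have "l ^ m = of_real (Re l ^ m)"
        using \<open>Im l = 0\<close> by (metis complex_is_Real_iff of_real_Re of_real_power)
      then have "matpow B m *v a = Re l ^ m *\<^sub>R a" by (simp add: orbit)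
      moreover have "cmod l = \<bar>Re l\<bar>" using \<open>Im l = 0\<close> by (simp add: cmod_eq_Re)
      ultimately show ?thesis by (simp add: power_abs)
    qed
    then show ?thesis
      using that[of a "norm a" "norm a"] \<open>vec_Re w' \<noteq> 0\<close> by (simp add: a_def)
  qed
qed

lemma ln_div_tendsto_of_bounds:
  fixes x :: "nat \<Rightarrow> real"
  assumes "n > 0" "r > 0" "\<alpha> > 0"
    and lower: "\<And>k. \<alpha> * r ^ (k div n) \<le> x k" and upper: "\<And>k. x k \<le> \<beta> * r ^ (k div n)"
  shows "(\<lambda>k. ln (x k) / real k) \<longlonglongrightarrow> ln r / real n"
proof -
  have "\<beta> > 0" using lower[of 0] upper[of 0] \<open>\<alpha> > 0\<close> by simp
  define C where "C = \<bar>ln \<alpha>\<bar> + \<bar>ln \<beta>\<bar> + \<bar>ln r\<bar>"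
  have close: "\<bar>ln (x k) - real k * ln r / real n\<bar> \<le> C" for k
  proof -
    define m where "m = k div n"
    have "\<alpha> * r ^ m > 0" using \<open>\<alpha> > 0\<close> \<open>r > 0\<close> by simp
    then have "x k > 0" using lower[of k] by (simp add: m_def)
    have "ln \<alpha> + real m * ln r \<le> ln (x k)"
      using ln_le_cancel_iff[of "\<alpha> * r ^ m" "x k"] lower[of k] \<open>x k > 0\<close> \<open>\<alpha> > 0\<close> \<open>r > 0\<close>
      by (simp add: m_def ln_mult ln_realpow)
    moreover have "ln (x k) \<le> ln \<beta> + real m * ln r"
      using ln_le_cancel_iff[of "x k" "\<beta> * r ^ m"] upper[of k] \<open>x k > 0\<close> \<open>\<beta> > 0\<close> \<open>r > 0\<close>
      by (simp add: m_def ln_mult ln_realpow)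
    moreover have "\<bar>real k * ln r / real n - real m * ln r\<bar> \<le> \<bar>ln r\<bar>"
    proof -
      have "real k = real m * real n + real (k mod n)"
        unfolding m_def by (metis div_mult_mod_eq of_nat_add of_nat_mult)
      then have "real k * ln r / real n - real m * ln r = real (k mod n) / real n * ln r"
        using \<open>n > 0\<close> by (simp add: field_simps)
      also have "\<bar>\<dots>\<bar> \<le> 1 * \<bar>ln r\<bar>"
        unfolding abs_mult using \<open>n > 0\<close> by (intro mult_right_mono) auto
      finally show ?thesis by simp
    qed
    ultimately show ?thesis unfolding C_def by linarith
  qed
  have "(\<lambda>k. ln (x k) / real k - ln r / real n) \<longlonglongrightarrow> 0"
  proof (rule Lim_null_comparison[OF eventually_sequentiallyI lim_const_over_n])
    fix k :: nat assume "1 \<le> k"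
    then have "ln (x k) / real k - ln r / real n = (ln (x k) - real k * ln r / real n) / real k"
      by (simp add: field_simps)
    then show "norm (ln (x k) / real k - ln r / real n) \<le> C / real k"
      using close[of k] by (simp add: divide_right_mono)
  qed
  then show ?thesis by (rule LIM_zero_cancel)
qed

lemma opnorm_bound: "norm (M *v v) \<le> opnorm M * norm v"
  unfolding opnorm_def by (rule onorm) (simp add: linear_conv_bounded_linear)

lemma opnorm_nonneg: "0 \<le> opnorm M"
  unfolding opnorm_def by (rule onorm_pos_le) (simp add: linear_conv_bounded_linear)

lemma det_eq_0_iff_kernel: "Determinants.det (B :: real^'n^'n) = 0 \<longleftrightarrow> (\<exists>v. v \<noteq> 0 \<and> B *v v = 0)"
  by (metis invertible_det_nz invertible_def matrix_left_invertible_ker matrix_left_right_inverse)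

lemma cmat_eigenvalue_nonzero:
  fixes B :: "real^'n^'n"
  assumes "Determinants.det B \<noteq> 0" "cmat B *v w = l *s w" "w \<noteq> 0"
  shows "l \<noteq> 0"
proof
  assume "l = 0"
  then have "B *v vec_Re w = 0" "B *v vec_Im w = 0"
    using arg_cong[OF assms(2), of vec_Re] arg_cong[OF assms(2), of vec_Im]
    by (simp_all add: vec_Re_mult vec_Im_mult vec_Re_scale vec_Im_scale)
  then have "w = 0" using assms(1) det_eq_0_iff_kernel vec_Re_Im_eq_0 by metis
  with assms(3) show False ..
qed

lemma lyapunov_exponents_periodic_singular:
  assumes "(f ^^ n) p = p" "Determinants.det (cocycle f A n p) = 0"
  shows "- \<infinity> \<in> lyapunov_exponents f A p"
proof -
  obtain v where "v \<noteq> 0" and kernel: "cocycle f A n p *v v = 0"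
    using assms(2) det_eq_0_iff_kernel by blast
  have "ereal_log_rate k (norm (cocycle f A k p *v v)) = - \<infinity>" if "n \<le> k" for k
  proof -
    have "cocycle f A k p = cocycle f A (k - n) p ** cocycle f A n p"
      using cocycle_add[of f A "k - n" n p] that assms(1) by simp
    then show ?thesis using kernel by (simp add: ereal_log_rate_def matrix_vector_mul_assoc[symmetric])
  qed
  then have "((\<lambda>k. ereal_log_rate k (norm (cocycle f A k p *v v))) \<longlongrightarrow> - \<infinity>) sequentially"
    by (intro tendsto_eventually eventually_sequentiallyI)
  with \<open>v \<noteq> 0\<close> show ?thesis unfolding lyapunov_exponents_def by blast
qed

lemma lyapunov_exponents_periodic_eigenvalue:
  assumes "(f ^^ n) p = p" "n > 0" "Determinants.det (cocycle f A n p) \<noteq> 0"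
    and eigen: "cmat (cocycle f A n p) *v w = l *s w" "w \<noteq> 0"
  shows "ereal (ln (cmod l) / real n) \<in> lyapunov_exponents f A p"
proof -
  define B where "B = cocycle f A n p"
  have "l \<noteq> 0" by (rule cmat_eigenvalue_nonzero[OF assms(3) eigen])
  obtain a \<kappa> K where "a \<noteq> 0" "\<kappa> > 0" and orbit_lower: "\<And>m. \<kappa> * cmod l ^ m \<le> norm (matpow B m *v a)"
    and orbit_upper: "\<And>m. norm (matpow B m *v a) \<le> K * cmod l ^ m"
    using real_orbit_growth_of_eigenvalue[OF eigen[folded B_def]] by blast
  define X where "X k = cocycle f A k p *v a" for k
  \<comment> \<open>Writing k = m n + r, X k lies between the returns B^m a and B^(m+1) a, up to
    the operator norms of the finitely many cocycles of length at most n.\<close>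
  define S where "S = Max ((\<lambda>r. opnorm (cocycle f A r p)) ` {..<n})"
  define S' where "S' = Max ((\<lambda>r. opnorm (cocycle f A (n - r) ((f ^^ r) p))) ` {..<n})"
  have "\<kappa> * cmod l \<le> opnorm B * norm a"
    using orbit_lower[of 1] opnorm_bound[of B a] by (simp add: matpow_Suc)
  moreover have "\<kappa> * cmod l > 0" using \<open>\<kappa> > 0\<close> \<open>l \<noteq> 0\<close> by simp
  ultimately have "0 < opnorm B * norm a" by linarith
  then have "opnorm B > 0" by (simp add: zero_less_mult_iff)
  moreover have "opnorm B \<le> S'"
    unfolding S'_def B_def using \<open>n > 0\<close> by (intro Max_ge finite_imageI rev_image_eqI[of 0]) auto
  ultimately have "S' > 0" by linarith
  define \<alpha> where "\<alpha> = \<kappa> * cmod l / S'"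
  have "\<alpha> > 0" using \<open>\<kappa> > 0\<close> \<open>l \<noteq> 0\<close> \<open>S' > 0\<close> by (simp add: \<alpha>_def)
  have bounds: "\<alpha> * cmod l ^ (k div n) \<le> norm (X k) \<and> norm (X k) \<le> S * K * cmod l ^ (k div n)" for k
  proof -
    define m r where "m = k div n" and "r = k mod n"
    have "r < n" using \<open>n > 0\<close> by (simp add: r_def)
    have Xk: "X k = cocycle f A r p *v (matpow B m *v a)"
      using cocycle_periodic[OF assms(1), of A m r]
      by (simp add: X_def B_def m_def r_def matrix_vector_mul_assoc[symmetric] mult.commute)
    have "norm (X k) \<le> opnorm (cocycle f A r p) * norm (matpow B m *v a)"
      unfolding Xk by (rule opnorm_bound)
    also have "\<dots> \<le> S * (K * cmod l ^ m)"
    proof (rule mult_mono[OF _ orbit_upper _ norm_ge_zero])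
      show "opnorm (cocycle f A r p) \<le> S"
        unfolding S_def using \<open>r < n\<close> by (intro Max_ge) auto
      then show "0 \<le> S" using opnorm_nonneg order_trans by blast
    qed
    finally have upper: "norm (X k) \<le> S * K * cmod l ^ m" by (simp add: mult.assoc)
    have "B = cocycle f A (n - r) ((f ^^ r) p) ** cocycle f A r p"
      using cocycle_add[of f A "n - r" r p] \<open>r < n\<close> by (simp add: B_def)
    then have "matpow B (Suc m) *v a = cocycle f A (n - r) ((f ^^ r) p) *v X k"
      by (simp add: matpow_Suc Xk matrix_vector_mul_assoc[symmetric])
    then have "\<kappa> * cmod l ^ Suc m \<le> opnorm (cocycle f A (n - r) ((f ^^ r) p)) * norm (X k)"
      using orbit_lower[of "Suc m"] opnorm_bound order_trans by metis
    also have "\<dots> \<le> S' * norm (X k)"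
      using \<open>r < n\<close> by (intro mult_right_mono) (auto simp: S'_def)
    finally have "\<alpha> * cmod l ^ m \<le> norm (X k)"
      using \<open>S' > 0\<close> by (simp add: \<alpha>_def field_simps)
    with upper show ?thesis by (simp add: m_def)
  qed
  then have "(\<lambda>k. ln (norm (X k)) / real k) \<longlonglongrightarrow> ln (cmod l) / real n"
    using \<open>n > 0\<close> \<open>l \<noteq> 0\<close> \<open>\<alpha> > 0\<close>
    by (intro ln_div_tendsto_of_bounds[where \<alpha> = \<alpha> and \<beta> = "S * K"]) auto
  then have "((\<lambda>k. ereal (ln (norm (X k)) / real k)) \<longlongrightarrow> ereal (ln (cmod l) / real n)) sequentially"
    by (rule tendsto_ereal)
  moreover have "ereal_log_rate k (norm (X k)) = ereal (ln (norm (X k)) / real k)" for k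
  proof -
    have "0 < \<alpha> * cmod l ^ (k div n)" using \<open>\<alpha> > 0\<close> \<open>l \<noteq> 0\<close> by simp
    then have "norm (X k) \<noteq> 0" using bounds[of k] by linarith
    then show ?thesis by (simp add: ereal_log_rate_def)
  qed
  ultimately show ?thesis
    unfolding lyapunov_exponents_def X_def using \<open>a \<noteq> 0\<close> by auto
qed

lemma periodic_det_cocycle_ge:
  fixes A :: "'a \<Rightarrow> real^'d^'d"
  assumes exponents: "\<forall>L\<in>lyapunov_exponents f A p. ereal c \<le> L"
    and "(f ^^ n) p = p" "n > 0"
  shows "exp (real n * (real CARD('d) * c)) \<le> \<bar>Determinants.det (cocycle f A n p)\<bar>"
proof (rule ccontr)
  define B where "B = cocycle f A n p"
  have "Determinants.det B \<noteq> 0"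
    using lyapunov_exponents_periodic_singular[OF assms(2)] exponents by (force simp: B_def)
  assume "\<not> ?thesis"
  then have "\<bar>Determinants.det B\<bar> < exp (real n * c) ^ CARD('d)"
    by (simp add: B_def algebra_simps flip: exp_of_nat_mult)
  \<comment> \<open>A small determinant forces a small eigenvalue, whose exponent would lie below c.\<close>
  moreover obtain l w where "w \<noteq> 0" "cmat B *v w = l *s w"
    and "cmod l ^ CARD('d) \<le> cmod (Determinants.det (cmat B))"
    using complex_eigenvector_norm_power_le_det by blast
  ultimately have "cmod l ^ CARD('d) < exp (real n * c) ^ CARD('d)"
    by (simp add: det_cmat)
  then have "cmod l < exp (real n * c)"
    by (rule power_less_imp_less_base) simp
  moreover have "l \<noteq> 0"
    using cmat_eigenvalue_nonzero \<open>Determinants.det B \<noteq> 0\<close> \<open>cmat B *v w = l *s w\<close> \<open>w \<noteq> 0\<close> by blast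
  moreover have "c \<le> ln (cmod l) / real n"
    using lyapunov_exponents_periodic_eigenvalue[OF assms(2,3)] exponents
      \<open>Determinants.det B \<noteq> 0\<close> \<open>cmat B *v w = l *s w\<close> \<open>w \<noteq> 0\<close>
    unfolding B_def by fastforce
  ultimately show False
    using \<open>n > 0\<close> by (simp add: field_simps ln_ge_iff)
qed

section \<open>Hoelder continuity of the determinant\<close>

lemma entry_le_opnorm: "\<bar>M $ i $ j\<bar> \<le> opnorm (M :: real^'n^'m)"
proof -
  have "\<bar>M $ i $ j\<bar> = \<bar>(M *v axis j 1) $ i\<bar>"
    by (simp add: matrix_vector_mult_basis column_def)
  also have "\<dots> \<le> norm (M *v axis j 1)" by (rule component_le_norm_cart)
  also have "\<dots> \<le> opnorm M" using opnorm_bound[of M "axis j 1"] by (simp add: norm_axis_1)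
  finally show ?thesis .
qed

lemma abs_prod_diff_le:
  fixes a b :: "'i \<Rightarrow> real"
  assumes "R > 0" "\<And>i. i \<in> I \<Longrightarrow> \<bar>a i\<bar> \<le> R" "\<And>i. i \<in> I \<Longrightarrow> \<bar>b i\<bar> \<le> R"
  shows "\<bar>prod a I - prod b I\<bar> \<le> R ^ card I / R * (\<Sum>i\<in>I. \<bar>a i - b i\<bar>)"
proof -
  have "prod a I - prod b I = R ^ card I * ((\<Prod>i\<in>I. a i / R) - (\<Prod>i\<in>I. b i / R))"
    using \<open>R > 0\<close> by (simp add: prod_dividef right_diff_distrib)
  also have "\<bar>\<dots>\<bar> \<le> R ^ card I * (\<Sum>i\<in>I. \<bar>a i / R - b i / R\<bar>)"
  proof -
    have "norm ((\<Prod>i\<in>I. a i / R) - (\<Prod>i\<in>I. b i / R)) \<le> (\<Sum>i\<in>I. norm (a i / R - b i / R))"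
      using assms by (intro norm_prod_diff) (auto simp: abs_divide field_simps)
    then show ?thesis using \<open>R > 0\<close> by (simp add: abs_mult mult_left_mono)
  qed
  also have "(\<Sum>i\<in>I. \<bar>a i / R - b i / R\<bar>) = (\<Sum>i\<in>I. \<bar>a i - b i\<bar>) / R"
    using \<open>R > 0\<close> by (simp add: sum_divide_distrib diff_divide_distrib[symmetric] abs_divide)
  finally show ?thesis by simp
qed

lemma abs_det_diff_le:
  fixes X Y :: "real^'n^'n"
  assumes "R > 0" "\<And>i j. \<bar>X $ i $ j\<bar> \<le> R" "\<And>i j. \<bar>Y $ i $ j\<bar> \<le> R"
    and "\<And>i j. \<bar>X $ i $ j - Y $ i $ j\<bar> \<le> \<delta>"
  shows "\<bar>Determinants.det X - Determinants.det Y\<bar> \<le> fact CARD('n) * R ^ CARD('n) / R * CARD('n) * \<delta>"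
proof -
  let ?P = "{p. p permutes (UNIV :: 'n set)}"
  let ?d = "\<lambda>p. (\<Prod>i\<in>UNIV. X $ i $ p i) - (\<Prod>i\<in>UNIV. Y $ i $ p i)"
  have permutation_term: "\<bar>of_int (sign p) * ?d p\<bar> \<le> R ^ CARD('n) / R * CARD('n) * \<delta>" for p
  proof -
    have "\<bar>?d p\<bar> \<le> R ^ CARD('n) / R * (\<Sum>i\<in>UNIV. \<bar>X $ i $ p i - Y $ i $ p i\<bar>)"
      using assms(2,3)
      by (intro abs_prod_diff_le[OF \<open>R > 0\<close>, where a = "\<lambda>i. X $ i $ p i" and b = "\<lambda>i. Y $ i $ p i"])
    also have "\<dots> \<le> R ^ CARD('n) / R * (CARD('n) * \<delta>)"
      using assms(1,4) sum_bounded_above[of UNIV "\<lambda>i. \<bar>X $ i $ p i - Y $ i $ p i\<bar>" \<delta>]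
      by (intro mult_left_mono) auto
    moreover have "\<bar>of_int (sign p) :: real\<bar> = 1" by (simp add: sign_def)
    ultimately show ?thesis by (simp add: abs_mult mult.assoc)
  qed
  have "\<bar>Determinants.det X - Determinants.det Y\<bar> = \<bar>\<Sum>p\<in>?P. of_int (sign p) * ?d p\<bar>"
    unfolding Determinants.det_def sum_subtractf[symmetric] by (simp add: right_diff_distrib)
  also have "\<dots> \<le> (\<Sum>p\<in>?P. \<bar>of_int (sign p) * ?d p\<bar>)" by (rule sum_abs)
  also have "\<dots> \<le> (\<Sum>p\<in>?P. R ^ CARD('n) / R * CARD('n) * \<delta>)" by (rule sum_mono) (rule permutation_term)
  also have "\<dots> = fact CARD('n) * R ^ CARD('n) / R * CARD('n) * \<delta>"
    using card_permutations[of "UNIV :: 'n set" "CARD('n)"] by simp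
  finally show ?thesis .
qed

lemma holder_abs_det:
  fixes A :: "'a::metric_space \<Rightarrow> real^'n^'n"
  assumes "compact (UNIV :: 'a set)" "holder \<alpha> A" "\<alpha> > 0"
  obtains K where "K \<ge> 0"
    "\<And>x y. \<bar>\<bar>Determinants.det (A x)\<bar> - \<bar>Determinants.det (A y)\<bar>\<bar> \<le> K * dist x y powr \<alpha>"
proof -
  obtain C where "C > 0" and C: "\<And>x y. opnorm (A x - A y) \<le> C * dist x y powr \<alpha>"
    using assms(2) unfolding holder_def by blast
  have entry: "\<bar>A x $ i $ j - A y $ i $ j\<bar> \<le> C * dist x y powr \<alpha>" for x y i j
    using entry_le_opnorm[of "A x - A y" i j] C[of x y] by simp
  fix x0 :: 'a
  obtain \<Delta> where \<Delta>: "\<And>y. dist x0 y \<le> \<Delta>"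
    using compact_imp_bounded[OF assms(1)] unfolding bounded_any_center[where a = x0] by blast
  define R where "R = 1 + opnorm (A x0) + C * \<Delta> powr \<alpha>"
  have "R > 0" using opnorm_nonneg[of "A x0"] \<open>C > 0\<close> by (simp add: R_def add_pos_nonneg)
  have bounded: "\<bar>A x $ i $ j\<bar> \<le> R" for x i j
  proof -
    have "C * dist x x0 powr \<alpha> \<le> C * \<Delta> powr \<alpha>"
      using \<Delta>[of x] \<open>C > 0\<close> \<open>\<alpha> > 0\<close> by (intro mult_left_mono powr_mono2) (auto simp: dist_commute)
    then show ?thesis
      using entry[where x = x and y = x0 and i = i and j = j] entry_le_opnorm[of "A x0" i j]
      by (simp add: R_def)
  qed
  define K where "K = fact CARD('n) * R ^ CARD('n) / R * CARD('n) * C"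
  have "K \<ge> 0" using \<open>R > 0\<close> \<open>C > 0\<close> by (simp add: K_def)
  moreover have "\<bar>\<bar>Determinants.det (A x)\<bar> - \<bar>Determinants.det (A y)\<bar>\<bar> \<le> K * dist x y powr \<alpha>" for x y
  proof -
    have "\<bar>Determinants.det (A x) - Determinants.det (A y)\<bar> \<le> K * dist x y powr \<alpha>"
      using abs_det_diff_le[OF \<open>R > 0\<close> bounded bounded entry[where x = x and y = y]]
      by (simp add: K_def mult.assoc)
    then show ?thesis using abs_triangle_ineq3 order_trans by blast
  qed
  ultimately show ?thesis by (rule that)
qed

theorem corollary2p2:
  fixes f :: "'a::metric_space \<Rightarrow> 'a"
    and A :: "'a \<Rightarrow> real^'d^'d"
    and \<alpha> c :: real
  assumes "compact (UNIV :: 'a set)"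
    and "\<exists>g. homeomorphism UNIV UNIV f g"
    and "anosov_closing f"
    and "\<alpha> > 0" and "holder \<alpha> A"
    and "\<forall>p. periodic_point f p \<longrightarrow> (\<forall>L\<in>lyapunov_exponents f A p. L \<ge> ereal c)"
  shows "\<forall>\<mu>. prob_space \<mu> \<and> sets \<mu> = sets borel \<and> invariant_measure f \<mu> \<longrightarrow>
           (AE x in \<mu>. invertible (A x))"
proof (intro allI impI)
  fix \<mu> :: "'a measure"
  assume \<mu>: "prob_space \<mu> \<and> sets \<mu> = sets borel \<and> invariant_measure f \<mu>"
  obtain K where "K \<ge> 0"
    and holder_det: "\<And>x y. \<bar>\<bar>Determinants.det (A x)\<bar> - \<bar>Determinants.det (A y)\<bar>\<bar> \<le> K * dist x y powr \<alpha>"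
    using holder_abs_det[OF assms(1,5,4)] by blast
  have "exp (real n * (real CARD('d) * c)) \<le> (\<Prod>j<n. \<bar>Determinants.det (A ((f ^^ j) p))\<bar>)"
    if "(f ^^ n) p = p" "n > 0" for p n
    using periodic_det_cocycle_ge[OF _ that] assms(6) that
    by (auto simp: periodic_point_def det_cocycle abs_prod)
  then have "AE x in \<mu>. \<bar>Determinants.det (A x)\<bar> \<noteq> 0"
    using AE_nonzero_of_periodic_products_ge[OF assms(1,3,4) \<open>K \<ge> 0\<close> holder_det abs_ge_zero] \<mu>
    by blast
  then show "AE x in \<mu>. invertible (A x)"
    by (simp add: invertible_det_nz)
qed

end
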